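(* Let $\mathsf{K}$ be the variety of type $\langle\wedge,\vee,\neg,J_2,0,1\rangle$ axiomatised by: - $x\vee x\approx x$; - $x\vee y\approx y\vee x$; - $x\vee(y\vee z)\approx(x\vee y)\vee z$; - $\neg\neg x\approx x$; - $x\wedge y\approx\neg(\neg x\vee\neg y)$; - $x\wedge(\neg x\vee y)\approx x\wedge y$; - $0\vee x\approx x$; - $1\approx\neg0$; - $J_2x\vee\neg J_2x\approx1$; - $x\vee J_2y\approx x\vee J_2(x\vee y)$; - $x\wedge J_2x\approx x$; - $J_2(x\wedge\neg x)\approx0$. Then $\mathsf{K}$ satisfies: (1) $x\vee J_2x\approx x$; (2) $x\approx J_2x\vee(x\wedge\neg x)$; (3) $J_2J_2x\approx J_2x$; (4) $x\vee\neg J_2y\approx x\vee\neg J_2(x\vee y)$. *)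

theory Defs
  imports Main
begin

definition K_algebra ::
  "'a set \<Rightarrow> ('a \<Rightarrow> 'a \<Rightarrow> 'a) \<Rightarrow> ('a \<Rightarrow> 'a \<Rightarrow> 'a) \<Rightarrow> ('a \<Rightarrow> 'a) \<Rightarrow> ('a \<Rightarrow> 'a)
   \<Rightarrow> 'a \<Rightarrow> 'a \<Rightarrow> bool" where
  "K_algebra A meet join neg J z u \<longleftrightarrow>
     (\<forall>x\<in>A. \<forall>y\<in>A. meet x y \<in> A) \<and>
     (\<forall>x\<in>A. \<forall>y\<in>A. join x y \<in> A) \<and>
     (\<forall>x\<in>A. neg x \<in> A) \<and>
     (\<forall>x\<in>A. J x \<in> A) \<and>
     z \<in> A \<and> u \<in> A \<and>
     (\<forall>x\<in>A. join x x = x) \<and>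
     (\<forall>x\<in>A. \<forall>y\<in>A. join x y = join y x) \<and>
     (\<forall>x\<in>A. \<forall>y\<in>A. \<forall>w\<in>A. join x (join y w) = join (join x y) w) \<and>
     (\<forall>x\<in>A. neg (neg x) = x) \<and>
     (\<forall>x\<in>A. \<forall>y\<in>A. meet x y = neg (join (neg x) (neg y))) \<and>
     (\<forall>x\<in>A. \<forall>y\<in>A. meet x (join (neg x) y) = meet x y) \<and>
     (\<forall>x\<in>A. join z x = x) \<and>
     u = neg z \<and>
     (\<forall>x\<in>A. join (J x) (neg (J x)) = u) \<and>
     (\<forall>x\<in>A. \<forall>y\<in>A. join x (J y) = join x (J (join x y))) \<and>
     (\<forall>x\<in>A. meet x (J x) = x) \<and>
     (\<forall>x\<in>A. J (meet x (neg x)) = z)"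

end

theory Submission
  imports Defs
begin

text \<open>The absorption axiom
  \<open>x \<and> (\<not>x \<or> y) = x \<and> y\<close> and De Morgan give, whenever \<open>x \<and> y = x\<close>, the equation
  \<open>x \<and> \<not>y = x \<and> \<not>x\<close>. Together with (1), which follows from the axiom for \<open>J\<^sub>2\<close> of a
  join applied to \<open>y = x \<and> \<not>x\<close>, each \<open>x\<close> decomposes as \<open>J\<^sub>2x \<or> (x \<and> \<not>J\<^sub>2x)\<close>.
  Since \<open>x \<and> J\<^sub>2x = x\<close> this is (2); applied to \<open>J\<^sub>2x\<close>, whose meet with its own
  negation is \<open>0\<close>, it is (3). Identity (4) is the De Morgan dual of the
  \<open>J\<^sub>2\<close>-join axiom, using \<open>\<not>x \<and> (x \<or> w) = \<not>x \<and> w\<close>.\<close>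

locale K_alg =
  fixes A :: "'a set" and meet join :: "'a \<Rightarrow> 'a \<Rightarrow> 'a"
    and neg J :: "'a \<Rightarrow> 'a" and z u :: 'a
  assumes meet_closed: "\<And>x y. x \<in> A \<Longrightarrow> y \<in> A \<Longrightarrow> meet x y \<in> A"
    and join_closed: "\<And>x y. x \<in> A \<Longrightarrow> y \<in> A \<Longrightarrow> join x y \<in> A"
    and neg_closed: "\<And>x. x \<in> A \<Longrightarrow> neg x \<in> A"
    and J_closed: "\<And>x. x \<in> A \<Longrightarrow> J x \<in> A"
    and zero_closed: "z \<in> A"
    and join_idem: "\<And>x. x \<in> A \<Longrightarrow> join x x = x"
    and join_commute: "\<And>x y. x \<in> A \<Longrightarrow> y \<in> A \<Longrightarrow> join x y = join y x"
    and neg_neg: "\<And>x. x \<in> A \<Longrightarrow> neg (neg x) = x"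
    and meet_eq: "\<And>x y. x \<in> A \<Longrightarrow> y \<in> A \<Longrightarrow> meet x y = neg (join (neg x) (neg y))"
    and meet_join_neg: "\<And>x y. x \<in> A \<Longrightarrow> y \<in> A \<Longrightarrow> meet x (join (neg x) y) = meet x y"
    and join_zero_left: "\<And>x. x \<in> A \<Longrightarrow> join z x = x"
    and one_eq: "u = neg z"
    and join_J_neg_J: "\<And>x. x \<in> A \<Longrightarrow> join (J x) (neg (J x)) = u"
    and join_J_join: "\<And>x y. x \<in> A \<Longrightarrow> y \<in> A \<Longrightarrow> join x (J y) = join x (J (join x y))"
    and meet_J_self: "\<And>x. x \<in> A \<Longrightarrow> meet x (J x) = x"
    and J_meet_neg_self: "\<And>x. x \<in> A \<Longrightarrow> J (meet x (neg x)) = z"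
begin

lemma join_zero_right: "x \<in> A \<Longrightarrow> join x z = x"
  using join_commute join_zero_left zero_closed by simp

lemma meet_commute: "x \<in> A \<Longrightarrow> y \<in> A \<Longrightarrow> meet x y = meet y x"
  using meet_eq join_commute neg_closed by metis

lemma meet_neg_join: "x \<in> A \<Longrightarrow> w \<in> A \<Longrightarrow> meet (neg x) (join x w) = meet (neg x) w"
  using meet_join_neg[of "neg x" w] neg_neg neg_closed by simp

lemma join_neg_eq: "x \<in> A \<Longrightarrow> y \<in> A \<Longrightarrow> join x (neg y) = neg (meet (neg x) y)"
  using meet_eq[of "neg x" y] neg_neg neg_closed join_closed by simp

lemma join_meet_neg: "x \<in> A \<Longrightarrow> y \<in> A \<Longrightarrow> join x (meet (neg x) y) = join x y"
proof -
  assume x: "x \<in> A" and y: "y \<in> A"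
  have ny: "neg y \<in> A" using y by (rule neg_closed)
  have "join x (meet (neg x) y) = join x (neg (join x (neg y)))"
    using meet_eq[OF neg_closed[OF x] y] neg_neg[OF x] by simp
  also have "\<dots> = neg (meet (neg x) (join x (neg y)))"
    using join_neg_eq[OF x join_closed[OF x ny]] .
  also have "\<dots> = neg (meet (neg x) (neg y))"
    using meet_neg_join[OF x ny] by simp
  also have "\<dots> = join x y"
    using join_neg_eq[OF x ny] neg_neg[OF y] by simp
  finally show ?thesis .
qed

lemma meet_neg_absorb:
  assumes x: "x \<in> A" and y: "y \<in> A" and "meet x y = x"
  shows "meet x (neg y) = meet x (neg x)"
proof -
  have "join (neg x) (neg y) = neg x"
    using assms meet_eq[OF x y] neg_neg neg_closed join_closed by metis
  then show ?thesis
    using meet_join_neg[OF x neg_closed[OF y]] by simp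
qed

lemma meet_neg_J: "x \<in> A \<Longrightarrow> meet x (neg (J x)) = meet x (neg x)"
  using meet_neg_absorb J_closed meet_J_self by blast

lemma meet_J_neg_J: "x \<in> A \<Longrightarrow> meet (J x) (neg (J x)) = z"
  using meet_eq[of "J x" "neg (J x)"] neg_neg join_commute join_J_neg_J
    one_eq zero_closed J_closed neg_closed by simp

lemma join_J_self: "x \<in> A \<Longrightarrow> join x (J x) = x"
proof -
  assume x: "x \<in> A"
  have "join x (meet x (neg x)) = x"
    using join_meet_neg[OF x x] meet_commute[OF x neg_closed[OF x]] join_idem[OF x] by simp
  then have "join x (J x) = join x (J (meet x (neg x)))"
    using join_J_join[OF x meet_closed[OF x neg_closed[OF x]]] by simp
  then show ?thesis
    using J_meet_neg_self[OF x] join_zero_right[OF x] by simp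
qed

lemma J_join_meet_neg_J: "x \<in> A \<Longrightarrow> x = join (J x) (meet x (neg (J x)))"
  using join_meet_neg[of "J x" x] meet_commute[of x "neg (J x)"]
    join_J_self join_commute J_closed neg_closed by simp

lemma J_join_meet_neg_self: "x \<in> A \<Longrightarrow> x = join (J x) (meet x (neg x))"
  using J_join_meet_neg_J meet_neg_J by simp

lemma J_J: "x \<in> A \<Longrightarrow> J (J x) = J x"
  using J_join_meet_neg_J[of "J x"] meet_neg_J[of "J x"] meet_J_neg_J
    join_zero_right J_closed by simp

lemma join_neg_J_join: "x \<in> A \<Longrightarrow> y \<in> A \<Longrightarrow> join x (neg (J y)) = join x (neg (J (join x y)))"
  using join_neg_eq meet_neg_join join_J_join J_closed join_closed by metis

end

lemma K_algebra_imp_K_alg: "K_algebra A meet join neg J z u \<Longrightarrow> K_alg A meet join neg J z u"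
  unfolding K_algebra_def K_alg_def by (elim conjE, intro conjI allI impI; meson)

theorem lemma4p2:
  fixes A :: "'a set" and meet join :: "'a \<Rightarrow> 'a \<Rightarrow> 'a"
    and neg J :: "'a \<Rightarrow> 'a" and z u :: 'a
  assumes "K_algebra A meet join neg J z u"
  shows "(\<forall>x\<in>A. join x (J x) = x) \<and>
         (\<forall>x\<in>A. x = join (J x) (meet x (neg x))) \<and>
         (\<forall>x\<in>A. J (J x) = J x) \<and>
         (\<forall>x\<in>A. \<forall>y\<in>A. join x (neg (J y)) = join x (neg (J (join x y))))"
proof -
  interpret K_alg A meet join neg J z u
    using assms by (rule K_algebra_imp_K_alg)
  show ?thesis
    using join_J_self J_join_meet_neg_self J_J join_neg_J_join by blast
qed

end
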